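(* Let $P \subseteq \mathbb{R}^7$ be an associative $3$-plane. Then the orthogonal direct sum $\Theta(P) = \Lambda^2(P) \oplus \Psi(P)$ is a Lie subalgebra of $\Lambda^2(\mathbb{R}^7) = \mathfrak{so}(7)$ isomorphic to $\mathfrak{so}(4)$.
   Context: Equip $\mathbb{R}^7$ with its standard inner product, orientation and basis. Let $\varphi = e_{123} - e_{167} - e_{527} - e_{563} - e_{415} - e_{426} - e_{437}$ ($e_{ijk} = e_i\wedge e_j\wedge e_k$), $\psi = \star\varphi = e_{4567} - e_{4523} - e_{4163} - e_{4127} - e_{2637} - e_{1537} - e_{1526}$, and define $\times$ by $\langle u \times v, w \rangle = \varphi(u,v,w)$. A $3$-dimensional subspace is associative if closed under $\times$. For $u,v$: $u\wedge v$ is the 2-form $(a,b)\mapsto \langle u,a\rangle\langle v,b\rangle - \langle u,b\rangle\langle v,a\rangle$, and $\Psi_{uv}$ is the 2-form $(a,b)\mapsto\psi(u,v,a,b)$. $\Lambda^2(P) = \mathrm{Span}\{u\wedge v: u,v\in P\}$, $\Psi(P) = \mathrm{Span}\{\Psi_{uv} : u,v\in P\}$. Skew bilinear forms are identified with skew-adjoint operators via $X(a,b) = \langle X(a),b\rangle$, the bracket is the commutator, and the inner product on $\Lambda^2$ is $\langle X,Y\rangle = \sum_{i,j} X(e_i,e_j)Y(e_i,e_j)$. *)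

theory Defs
  imports "HOL-Analysis.Analysis"
begin

text \<open>Vectors of R^7 are elements of real^7; coordinates are x $ 1, ..., x $ 7
  (the indices 1,...,7 of the numeral type 7 are pairwise distinct).
  The standard basis vector e_i is axis i 1.\<close>

definition e_i :: "7 \<Rightarrow> real^7" where
  "e_i i = axis i 1"

text \<open>e_{ijk} = e_i ^ e_j ^ e_k evaluated on (u,v,w): the 3x3 determinant.\<close>
definition e3 :: "7 \<Rightarrow> 7 \<Rightarrow> 7 \<Rightarrow> real^7 \<Rightarrow> real^7 \<Rightarrow> real^7 \<Rightarrow> real" where
  "e3 i j k u v w =
     u$i * (v$j * w$k - v$k * w$j)
   - u$j * (v$i * w$k - v$k * w$i)
   + u$k * (v$i * w$j - v$j * w$i)"

text \<open>e_{ijkl} evaluated on (a,b,c,d): the 4x4 determinant (Laplace expansion).\<close>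
definition e4 :: "7 \<Rightarrow> 7 \<Rightarrow> 7 \<Rightarrow> 7 \<Rightarrow> real^7 \<Rightarrow> real^7 \<Rightarrow> real^7 \<Rightarrow> real^7 \<Rightarrow> real" where
  "e4 i j k l a b c d =
     a$i * e3 j k l b c d - a$j * e3 i k l b c d
   + a$k * e3 i j l b c d - a$l * e3 i j k b c d"

definition phi :: "real^7 \<Rightarrow> real^7 \<Rightarrow> real^7 \<Rightarrow> real" where
  "phi u v w = e3 1 2 3 u v w - e3 1 6 7 u v w - e3 5 2 7 u v w - e3 5 6 3 u v w
             - e3 4 1 5 u v w - e3 4 2 6 u v w - e3 4 3 7 u v w"

definition psi :: "real^7 \<Rightarrow> real^7 \<Rightarrow> real^7 \<Rightarrow> real^7 \<Rightarrow> real" where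
  "psi a b c d = e4 4 5 6 7 a b c d - e4 4 5 2 3 a b c d - e4 4 1 6 3 a b c d
             - e4 4 1 2 7 a b c d - e4 2 6 3 7 a b c d - e4 1 5 3 7 a b c d
             - e4 1 5 2 6 a b c d"

definition cross7 :: "real^7 \<Rightarrow> real^7 \<Rightarrow> real^7" where
  "cross7 u v = (\<chi> i. phi u v (e_i i))"

definition associative :: "(real^7) set \<Rightarrow> bool" where
  "associative P \<longleftrightarrow> subspace P \<and> dim P = 3 \<and> (\<forall>u\<in>P. \<forall>v\<in>P. cross7 u v \<in> P)"

text \<open>2-forms as bilinear maps; identified with skew-adjoint operators (matrices)
  via X(a,b) = <X a, b>, i.e. the matrix entry (i,j) is X(e_j,e_i).\<close>
definition op_of :: "(real^7 \<Rightarrow> real^7 \<Rightarrow> real) \<Rightarrow> real^7^7" where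
  "op_of B = (\<chi> i j. B (e_i j) (e_i i))"

definition form_of :: "real^7^7 \<Rightarrow> real^7 \<Rightarrow> real^7 \<Rightarrow> real" where
  "form_of X a b = (X *v a) \<bullet> b"

definition wedge2 :: "real^7 \<Rightarrow> real^7 \<Rightarrow> real^7 \<Rightarrow> real^7 \<Rightarrow> real" where
  "wedge2 u v a b = (u \<bullet> a) * (v \<bullet> b) - (u \<bullet> b) * (v \<bullet> a)"

definition Psi2 :: "real^7 \<Rightarrow> real^7 \<Rightarrow> real^7 \<Rightarrow> real^7 \<Rightarrow> real" where
  "Psi2 u v a b = psi u v a b"

definition Lambda2 :: "(real^7) set \<Rightarrow> (real^7^7) set" where
  "Lambda2 P = span {op_of (wedge2 u v) | u v. u \<in> P \<and> v \<in> P}"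

definition PsiSpan :: "(real^7) set \<Rightarrow> (real^7^7) set" where
  "PsiSpan P = span {op_of (Psi2 u v) | u v. u \<in> P \<and> v \<in> P}"

definition Theta :: "(real^7) set \<Rightarrow> (real^7^7) set" where
  "Theta P = {X + Y | X Y. X \<in> Lambda2 P \<and> Y \<in> PsiSpan P}"

definition form_inner :: "real^7^7 \<Rightarrow> real^7^7 \<Rightarrow> real" where
  "form_inner X Y = (\<Sum>i\<in>UNIV. \<Sum>j\<in>UNIV. form_of X (e_i i) (e_i j) * form_of Y (e_i i) (e_i j))"

definition lie_bracket :: "'a::comm_ring_1^'n^'n \<Rightarrow> 'a^'n^'n \<Rightarrow> 'a^'n^'n" where
  "lie_bracket X Y = X ** Y - Y ** X"

definition so :: "(real^'n^'n) set" where
  "so = {M. transpose M = - M}"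

end

(*
  An associative 3-plane P is the image of the standard one P0 = span {e1, e2, e3} under a G2
  frame: for orthonormal x, y in P and a unit vector w orthogonal to P, the vectors
  x, y, x \<times> y, w, x \<times> w, y \<times> w, (x \<times> y) \<times> w form an orthonormal basis with the same
  multiplication table as the standard basis. The matrix g of such a frame preserves the cross
  product and psi, so conjugation by g maps Lambda2 P0, PsiSpan P0 and Theta P0 onto Lambda2 P,
  PsiSpan P and Theta P while preserving brackets, the inner product of 2-forms and skewness.
  For P0 everything is explicit: Theta P0 consists of the matrices theta_std a b with a, b in R^3,
  Lambda2 P0 and PsiSpan P0 being the parts with b = 0 and a = 0, and
  [theta_std a b, theta_std c d] = theta_std (a \<times> c) (2 (b \<times> d)).
  The same bracket relation holds for the parametrisation so4_std of so(4) by its self-dual and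
  anti-self-dual parts, which gives the isomorphism.
*)

theory Submission
  imports Defs
begin

lemma matrix_add_rdistrib: "(A + B) ** C = A ** C + B ** C"
  by (vector matrix_matrix_mult_def sum.distrib[symmetric] field_simps)

lemma Basis_vec_real: "(Basis :: (real^'n) set) = range (\<lambda>i. axis i 1)"
  by (auto simp: Basis_vec_def)

lemma span_eq_range_linear:
  fixes L :: "real^'n \<Rightarrow> 'b::real_vector"
  assumes "linear L" "G \<subseteq> range L" "\<And>i. L (axis i 1) \<in> G"
  shows "span G = range L"
proof
  show "span G \<subseteq> range L"
    using assms(2) linear_subspace_image[OF assms(1) subspace_UNIV] by (rule span_minimal)
  have "range L = span (L ` Basis)"
    using span_linear_image[OF assms(1), of Basis] by simp
  also have "\<dots> \<subseteq> span G"
    using assms(3) by (intro span_mono) (auto simp: Basis_vec_real)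
  finally show "range L \<subseteq> span G" .
qed

lemma span_bilinear_pairs_span:
  assumes "bilinear h"
  shows "span {h u v | u v. u \<in> span S \<and> v \<in> span S} = span {h u v | u v. u \<in> S \<and> v \<in> S}"
proof
  let ?G = "{h u v | u v. u \<in> S \<and> v \<in> S}"
  show "span ?G \<subseteq> span {h u v | u v. u \<in> span S \<and> v \<in> span S}"
    by (rule span_mono) (auto intro: span_base)
  have lin: "linear (h u)" "linear (\<lambda>u. h u v)" for u v
    using assms by (simp_all add: bilinear_def)
  have left: "h u v \<in> span ?G" if "u \<in> S" "v \<in> span S" for u v
  proof -
    have sub: "subspace {v. h u v \<in> span ?G}"
      using linear_subspace_vimage[OF lin(1) subspace_span] by (simp add: vimage_def)
    show ?thesis
      using that(2) by (induct rule: span_induct) (use sub that(1) in \<open>auto intro: span_base\<close>)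
  qed
  have "h u v \<in> span ?G" if "u \<in> span S" "v \<in> span S" for u v
  proof -
    have sub: "subspace {u. h u v \<in> span ?G}"
      using linear_subspace_vimage[OF lin(2) subspace_span] by (simp add: vimage_def)
    show ?thesis
      using that(1) by (induct rule: span_induct) (use sub left that(2) in auto)
  qed
  then show "span {h u v | u v. u \<in> span S \<and> v \<in> span S} \<subseteq> span ?G"
    by (intro span_minimal) (auto simp: subspace_span)
qed

lemma span_pairs_image:
  assumes "linear F" "\<And>u v. h (f u) (f v) = F (h u v)"
  shows "span {h u v | u v. u \<in> f ` S \<and> v \<in> f ` S} = F ` span {h u v | u v. u \<in> S \<and> v \<in> S}"
proof -
  have "{h u v | u v. u \<in> f ` S \<and> v \<in> f ` S} = F ` {h u v | u v. u \<in> S \<and> v \<in> S}"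
    using assms(2) by auto (metis imageI)
  then show ?thesis by (simp add: span_linear_image[OF assms(1)])
qed

lemma sums_linear_image:
  assumes "linear F"
  shows "{X + Y | X Y. X \<in> F ` A \<and> Y \<in> F ` B} = F ` {X + Y | X Y. X \<in> A \<and> Y \<in> B}"
proof (intro equalityI subsetI)
  fix Z assume "Z \<in> {X + Y | X Y. X \<in> F ` A \<and> Y \<in> F ` B}"
  then obtain X Y where "X \<in> A" "Y \<in> B" "Z = F X + F Y" by blast
  then have "Z = F (X + Y)" "X + Y \<in> {X + Y | X Y. X \<in> A \<and> Y \<in> B}"
    using linear_add[OF assms, of X Y] by auto
  then show "Z \<in> F ` {X + Y | X Y. X \<in> A \<and> Y \<in> B}"
    by (rule image_eqI)
next
  fix Z assume "Z \<in> F ` {X + Y | X Y. X \<in> A \<and> Y \<in> B}"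
  then obtain X Y where "X \<in> A" "Y \<in> B" "Z = F (X + Y)" by blast
  then show "Z \<in> {X + Y | X Y. X \<in> F ` A \<and> Y \<in> F ` B}"
    using linear_add[OF assms, of X Y] by blast
qed

lemma orthonormal_pair_in_subspace:
  fixes S :: "'a::euclidean_space set"
  assumes "subspace S" "dim S \<ge> 2"
  obtains x y where "x \<in> S" "y \<in> S" "x \<bullet> x = 1" "y \<bullet> y = 1" "x \<bullet> y = 0"
proof -
  obtain B where B: "B \<subseteq> S" "pairwise orthogonal B" "\<And>x. x \<in> B \<Longrightarrow> norm x = 1" "card B = dim S"
    using orthonormal_basis_subspace[OF assms(1)] by metis
  obtain C where "C \<subseteq> B" "card C = 2"
    using obtain_subset_with_card_n[of 2 B] B(4) assms(2) by metis
  then obtain x y where "x \<in> B" "y \<in> B" "x \<noteq> y"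
    unfolding card_2_iff by blast
  with B show thesis
    using that[of x y] by (auto simp: pairwise_def orthogonal_def norm_eq_1)
qed

lemma unit_orthogonal_to_subspace:
  fixes S :: "'a::euclidean_space set"
  assumes "dim S < DIM('a)"
  obtains w where "w \<bullet> w = 1" "\<And>v. v \<in> S \<Longrightarrow> v \<bullet> w = 0"
proof -
  obtain x where x: "x \<noteq> 0" "\<And>y. y \<in> span S \<Longrightarrow> orthogonal x y"
    using orthogonal_to_subspace_exists[OF assms] by blast
  show thesis
  proof (rule that[of "x /\<^sub>R norm x"])
    show "(x /\<^sub>R norm x) \<bullet> (x /\<^sub>R norm x) = 1"
      using x(1) norm_eq_1 by fastforce
    show "v \<bullet> (x /\<^sub>R norm x) = 0" if "v \<in> S" for v
      using x(2)[OF span_base[OF that]] by (simp add: orthogonal_def inner_commute)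
  qed
qed

lemma dim_span_orthonormal_family:
  fixes b :: "'i \<Rightarrow> 'a::euclidean_space"
  assumes "\<And>i j. b i \<bullet> b j = (if i = j then 1 else 0)"
  shows "dim (span (b ` I)) = card I"
proof -
  have "inj b"
    by (rule injI) (metis assms zero_neq_one)
  moreover have "pairwise orthogonal (b ` I)"
    by (auto simp: pairwise_def orthogonal_def assms)
  moreover have "0 \<notin> b ` I"
    using assms by (metis image_iff inner_zero_left zero_neq_one)
  ultimately show ?thesis
    by (simp add: pairwise_orthogonal_independent dim_eq_card_independent card_image inj_on_subset)
qed

section \<open>The seven-dimensional cross product\<close>

lemma exhaust_7:
  fixes x :: 7
  shows "x = 1 \<or> x = 2 \<or> x = 3 \<or> x = 4 \<or> x = 5 \<or> x = 6 \<or> x = 7"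
proof (induct x)
  case (of_int z)
  then have "z = 0 \<or> z = 1 \<or> z = 2 \<or> z = 3 \<or> z = 4 \<or> z = 5 \<or> z = 6" by fastforce
  then show ?case by auto
qed

lemma forall_7: "(\<forall>i::7. P i) \<longleftrightarrow> P 1 \<and> P 2 \<and> P 3 \<and> P 4 \<and> P 5 \<and> P 6 \<and> P 7"
  by (metis exhaust_7)

lemma UNIV_7: "UNIV = {1, 2, 3, 4, 5, 6, 7::7}"
  using exhaust_7 by auto

lemma sum_7: "sum f (UNIV::7 set) = f 1 + f 2 + f 3 + f 4 + f 5 + f 6 + f 7"
  unfolding UNIV_7 by (simp add: ac_simps)

lemma inner_vec_7:
  "(x::real^7) \<bullet> y = x$1*y$1 + x$2*y$2 + x$3*y$3 + x$4*y$4 + x$5*y$5 + x$6*y$6 + x$7*y$7"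
  by (simp add: inner_vec_def sum_7)

lemma inner_e_i: "e_i i \<bullet> e_i j = (if i = j then 1 else 0)"
  by (simp add: e_i_def inner_axis_axis)

lemma cross7_components:
  "cross7 u v $ 1 = (u$2 * v$3 - u$3 * v$2) + (u$4 * v$5 - u$5 * v$4) - (u$6 * v$7 - u$7 * v$6)"
  "cross7 u v $ 2 = - (u$1 * v$3 - u$3 * v$1) + (u$4 * v$6 - u$6 * v$4) + (u$5 * v$7 - u$7 * v$5)"
  "cross7 u v $ 3 = (u$1 * v$2 - u$2 * v$1) + (u$4 * v$7 - u$7 * v$4) - (u$5 * v$6 - u$6 * v$5)"
  "cross7 u v $ 4 = - (u$1 * v$5 - u$5 * v$1) - (u$2 * v$6 - u$6 * v$2) - (u$3 * v$7 - u$7 * v$3)"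
  "cross7 u v $ 5 = (u$1 * v$4 - u$4 * v$1) - (u$2 * v$7 - u$7 * v$2) + (u$3 * v$6 - u$6 * v$3)"
  "cross7 u v $ 6 = (u$1 * v$7 - u$7 * v$1) + (u$2 * v$4 - u$4 * v$2) - (u$3 * v$5 - u$5 * v$3)"
  "cross7 u v $ 7 = - (u$1 * v$6 - u$6 * v$1) + (u$2 * v$5 - u$5 * v$2) + (u$3 * v$4 - u$4 * v$3)"
  by (simp_all add: cross7_def phi_def e3_def e_i_def axis_def algebra_simps)

lemma cross7_anticomm: "cross7 x y = - cross7 y x"
  by (simp add: vec_eq_iff forall_7 cross7_components algebra_simps)

lemma cross7_flip: "cross7 x y = z \<Longrightarrow> cross7 y x = - z"
  using cross7_anticomm[of y x] by simp

lemma cross7_self [simp]: "cross7 x x = 0"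
  by (simp add: vec_eq_iff forall_7 cross7_components)

lemma cross7_zero [simp]: "cross7 x 0 = 0" "cross7 0 x = 0"
  by (simp_all add: vec_eq_iff forall_7 cross7_components)

lemma cross7_minus_left [simp]: "cross7 (- x) y = - cross7 x y"
  by (simp add: vec_eq_iff forall_7 cross7_components algebra_simps)

lemma cross7_minus_right [simp]: "cross7 x (- y) = - cross7 x y"
  by (simp add: vec_eq_iff forall_7 cross7_components algebra_simps)

lemma cross7_add_left: "cross7 (x + y) z = cross7 x z + cross7 y z"
  and cross7_add_right: "cross7 z (x + y) = cross7 z x + cross7 z y"
  and cross7_scaleR_left: "cross7 (r *\<^sub>R x) z = r *\<^sub>R cross7 x z"
  and cross7_scaleR_right: "cross7 z (r *\<^sub>R x) = r *\<^sub>R cross7 z x"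
  by (simp_all add: vec_eq_iff forall_7 cross7_components algebra_simps)

lemma inner_cross7_left [simp]: "cross7 x y \<bullet> x = 0" "x \<bullet> cross7 x y = 0"
  by (simp_all add: inner_vec_7 cross7_components algebra_simps)

lemma inner_cross7_right [simp]: "cross7 x y \<bullet> y = 0" "y \<bullet> cross7 x y = 0"
  by (simp_all add: inner_vec_7 cross7_components algebra_simps)

lemma inner_cross7_cyclic: "cross7 x y \<bullet> z = cross7 y z \<bullet> x"
  by (simp add: inner_vec_7 cross7_components algebra_simps)

lemma inner_cross7_cross7:
  "cross7 x y \<bullet> cross7 x z = (x \<bullet> x) * (y \<bullet> z) - (x \<bullet> y) * (x \<bullet> z)"
  by (simp add: inner_vec_7 cross7_components algebra_simps)

lemma inner_cross7_cross7_right: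
  "cross7 x z \<bullet> cross7 y z = (z \<bullet> z) * (x \<bullet> y) - (z \<bullet> x) * (z \<bullet> y)"
  using inner_cross7_cross7[of z x y] cross7_anticomm[of x z] cross7_anticomm[of y z] by simp

lemma cross7_cross7: "cross7 x (cross7 x y) = (x \<bullet> y) *\<^sub>R x - (x \<bullet> x) *\<^sub>R y"
  by (simp add: vec_eq_iff forall_7 inner_vec_7 cross7_components algebra_simps)

lemma cross7_cross7_unit: "x \<bullet> x = 1 \<Longrightarrow> x \<bullet> y = 0 \<Longrightarrow> cross7 x (cross7 x y) = - y"
  by (simp add: cross7_cross7)

lemma cross7_cross7_unit':
  assumes "y \<bullet> y = 1" "x \<bullet> y = 0"
  shows "cross7 y (cross7 x y) = x"
proof -
  have "cross7 y (cross7 y x) = - x" using assms cross7_cross7[of y x] by (simp add: inner_commute)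
  then show ?thesis using cross7_anticomm[of y x] by simp
qed

lemma cross7_associator:
  "cross7 x (cross7 y z) + cross7 (cross7 x y) z = (2 * (x \<bullet> z)) *\<^sub>R y - (x \<bullet> y) *\<^sub>R z - (y \<bullet> z) *\<^sub>R x"
  by (simp add: vec_eq_iff forall_7 inner_vec_7 cross7_components algebra_simps)

lemma cross7_assoc_orthogonal:
  "x \<bullet> y = 0 \<Longrightarrow> x \<bullet> z = 0 \<Longrightarrow> y \<bullet> z = 0 \<Longrightarrow> cross7 x (cross7 y z) = - cross7 (cross7 x y) z"
  using cross7_associator[of x y z] by (simp add: eq_neg_iff_add_eq_0)

lemma cross7_basis:
  "cross7 (e_i 1) (e_i 2) = e_i 3"   "cross7 (e_i 1) (e_i 3) = - e_i 2"
  "cross7 (e_i 1) (e_i 4) = e_i 5"   "cross7 (e_i 1) (e_i 5) = - e_i 4"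
  "cross7 (e_i 1) (e_i 6) = - e_i 7" "cross7 (e_i 1) (e_i 7) = e_i 6"
  "cross7 (e_i 2) (e_i 3) = e_i 1"   "cross7 (e_i 2) (e_i 4) = e_i 6"
  "cross7 (e_i 2) (e_i 5) = e_i 7"   "cross7 (e_i 2) (e_i 6) = - e_i 4"
  "cross7 (e_i 2) (e_i 7) = - e_i 5" "cross7 (e_i 3) (e_i 4) = e_i 7"
  "cross7 (e_i 3) (e_i 5) = - e_i 6" "cross7 (e_i 3) (e_i 6) = e_i 5"
  "cross7 (e_i 3) (e_i 7) = - e_i 4" "cross7 (e_i 4) (e_i 5) = e_i 1"
  "cross7 (e_i 4) (e_i 6) = e_i 2"   "cross7 (e_i 4) (e_i 7) = e_i 3"
  "cross7 (e_i 5) (e_i 6) = - e_i 3" "cross7 (e_i 5) (e_i 7) = e_i 2"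
  "cross7 (e_i 6) (e_i 7) = - e_i 1"
  by (simp_all add: vec_eq_iff forall_7 cross7_components e_i_def axis_def)

lemma psi_eq_cross7:
  "psi a b c d = cross7 a (cross7 b c) \<bullet> d + (a \<bullet> b) * (c \<bullet> d) - (a \<bullet> c) * (b \<bullet> d)"
  by (simp only: inner_vec_7 cross7_components psi_def e4_def e3_def) algebra

section \<open>G2 frames\<close>

definition frame_matrix :: "('n \<Rightarrow> 'a::zero^'m) \<Rightarrow> 'a^'n^'m" where
  "frame_matrix b = (\<chi> i j. b j $ i)"

lemma column_frame_matrix [simp]: "column j (frame_matrix b) = b j"
  by (simp add: column_def frame_matrix_def vec_eq_iff)

lemma frame_matrix_mult_axis [simp]: "frame_matrix b *v axis k 1 = b k"
  by (simp add: frame_matrix_def matrix_vector_mult_def axis_def vec_eq_iff if_distrib cong: if_cong)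

lemma frame_matrix_mult_e_i [simp]: "frame_matrix b *v e_i k = b k"
  by (simp add: e_i_def)

lemma orthogonal_matrix_frame_matrix:
  fixes b :: "'n \<Rightarrow> real^'n"
  assumes "\<And>i j. b i \<bullet> b j = (if i = j then 1 else 0)"
  shows "orthogonal_matrix (frame_matrix b)"
  using assms by (simp add: orthogonal_matrix_orthonormal_columns norm_eq_1 orthogonal_def)

lemma orthogonal_matrix_inner:
  fixes g :: "real^'n^'n"
  assumes "orthogonal_matrix g"
  shows "(g *v x) \<bullet> (g *v y) = x \<bullet> y"
  using assms orthogonal_transformation_matrix[of "(*v) g"]
  by (simp add: orthogonal_transformation_def)

definition g2_frame :: "(7 \<Rightarrow> real^7) \<Rightarrow> bool" where
  "g2_frame b \<longleftrightarrow> (\<forall>i j. b i \<bullet> b j = (if i = j then 1 else 0))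
     \<and> (\<forall>i j. cross7 (b i) (b j) = frame_matrix b *v cross7 (e_i i) (e_i j))"

lemma g2_frame_orthogonal_matrix: "g2_frame b \<Longrightarrow> orthogonal_matrix (frame_matrix b)"
  by (simp add: g2_frame_def orthogonal_matrix_frame_matrix)

lemma g2_frame_cross7:
  assumes "g2_frame b"
  shows "cross7 (frame_matrix b *v x) (frame_matrix b *v y) = frame_matrix b *v cross7 x y"
proof -
  let ?g = "(*v) (frame_matrix b)"
  have "bilinear (\<lambda>x y. cross7 (?g x) (?g y))" "bilinear (\<lambda>x y. ?g (cross7 x y))"
    by (auto simp: bilinear_def intro!: linearI simp: cross7_add_left cross7_add_right
        cross7_scaleR_left cross7_scaleR_right matrix_vector_right_distrib matrix_vector_mult_scaleR)
  moreover have "cross7 (?g u) (?g v) = ?g (cross7 u v)" if "u \<in> Basis" "v \<in> Basis" for u v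
    using that assms by (auto simp: Basis_vec_real g2_frame_def e_i_def)
  ultimately show ?thesis by (rule bilinear_eq_stdbasis[THEN fun_cong, THEN fun_cong])
qed

lemma g2_frame_psi:
  assumes "g2_frame b"
  shows "psi (frame_matrix b *v a) (frame_matrix b *v c) (frame_matrix b *v d) (frame_matrix b *v f) = psi a c d f"
  using orthogonal_matrix_inner[OF g2_frame_orthogonal_matrix[OF assms]]
  by (simp add: psi_eq_cross7 g2_frame_cross7[OF assms])

text \<open>The triple (x, y, w) plays the role of (e1, e2, e4); the other vectors are built like
  e3 = e1 \<times> e2, e5 = e1 \<times> e4, e6 = e2 \<times> e4, e7 = e3 \<times> e4.\<close>

definition g2_frame_of :: "real^7 \<Rightarrow> real^7 \<Rightarrow> real^7 \<Rightarrow> 7 \<Rightarrow> real^7" where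
  "g2_frame_of x y w k =
     (if k = 1 then x else if k = 2 then y else if k = 3 then cross7 x y else
      if k = 4 then w else if k = 5 then cross7 x w else if k = 6 then cross7 y w
      else cross7 (cross7 x y) w)"

lemma g2_frame_of_simps:
  "g2_frame_of x y w 1 = x" "g2_frame_of x y w 2 = y" "g2_frame_of x y w 3 = cross7 x y"
  "g2_frame_of x y w 4 = w" "g2_frame_of x y w 5 = cross7 x w" "g2_frame_of x y w 6 = cross7 y w"
  "g2_frame_of x y w 7 = cross7 (cross7 x y) w"
  by (simp_all add: g2_frame_of_def)

locale g2_triple =
  fixes x y w :: "real^7"
  assumes unit: "x \<bullet> x = 1" "y \<bullet> y = 1" "w \<bullet> w = 1"
    and orth: "x \<bullet> y = 0" "x \<bullet> w = 0" "y \<bullet> w = 0" "cross7 x y \<bullet> w = 0"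
begin

lemma inner_frame:
  "cross7 x y \<bullet> cross7 x y = 1" "cross7 x w \<bullet> cross7 x w = 1" "cross7 y w \<bullet> cross7 y w = 1"
  "cross7 (cross7 x y) w \<bullet> cross7 (cross7 x y) w = 1"
  "cross7 x y \<bullet> cross7 x w = 0" "cross7 x y \<bullet> cross7 y w = 0" "cross7 x w \<bullet> cross7 y w = 0"
  "cross7 x w \<bullet> cross7 (cross7 x y) w = 0" "cross7 y w \<bullet> cross7 (cross7 x y) w = 0"
  "cross7 y w \<bullet> x = 0" "cross7 x w \<bullet> y = 0"
  "cross7 (cross7 x y) w \<bullet> x = 0" "cross7 (cross7 x y) w \<bullet> y = 0"
proof -
  have xy: "cross7 x y \<bullet> cross7 x y = 1"
    using inner_cross7_cross7[of x y y] unit orth by simp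
  then show "cross7 x y \<bullet> cross7 x y = 1" .
  show "cross7 x w \<bullet> cross7 x w = 1" "cross7 y w \<bullet> cross7 y w = 1"
    "cross7 (cross7 x y) w \<bullet> cross7 (cross7 x y) w = 1"
    "cross7 x w \<bullet> cross7 y w = 0" "cross7 x w \<bullet> cross7 (cross7 x y) w = 0"
    "cross7 y w \<bullet> cross7 (cross7 x y) w = 0"
    using xy unit orth by (simp_all add: inner_cross7_cross7_right inner_commute)
  have xyxw: "cross7 x y \<bullet> cross7 x w = 0"
    using inner_cross7_cross7[of x y w] unit orth by simp
  moreover have xyyw: "cross7 x y \<bullet> cross7 y w = 0"
    using inner_cross7_cross7[of y x w] cross7_anticomm[of x y] unit orth by (simp add: inner_commute)
  ultimately show "cross7 x y \<bullet> cross7 x w = 0" "cross7 x y \<bullet> cross7 y w = 0" .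
  show "cross7 y w \<bullet> x = 0" "cross7 x w \<bullet> y = 0"
    using inner_cross7_cyclic[of y w x] inner_cross7_cyclic[of w x y] inner_cross7_cyclic[of x w y]
      inner_cross7_cyclic[of w y x] cross7_anticomm[of y x] orth
    by simp_all
  show "cross7 (cross7 x y) w \<bullet> x = 0" "cross7 (cross7 x y) w \<bullet> y = 0"
    using inner_cross7_cyclic[of "cross7 x y" w x] inner_cross7_cyclic[of "cross7 x y" w y]
      cross7_anticomm[of w x] cross7_anticomm[of w y] xyxw xyyw
    by (simp_all add: inner_commute)
qed

lemma orthonormal_frame: "g2_frame_of x y w i \<bullet> g2_frame_of x y w j = (if i = j then 1 else 0)"
  using exhaust_7[of i] exhaust_7[of j] unit orth inner_frame
  by (auto simp: g2_frame_of_simps inner_commute)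

lemma cross_frame_double:
  "cross7 x (cross7 x y) = - y" "cross7 y (cross7 x y) = x"
  "cross7 x (cross7 x w) = - w" "cross7 y (cross7 y w) = - w"
  "cross7 (cross7 x y) (cross7 (cross7 x y) w) = - w"
  "cross7 w (cross7 x w) = x" "cross7 w (cross7 y w) = y" "cross7 w (cross7 (cross7 x y) w) = cross7 x y"
  using unit orth inner_frame by (simp_all add: cross7_cross7_unit cross7_cross7_unit' inner_commute)

lemma cross_frame_mixed:
  "cross7 x (cross7 y w) = - cross7 (cross7 x y) w" "cross7 x (cross7 (cross7 x y) w) = cross7 y w"
  "cross7 y (cross7 x w) = cross7 (cross7 x y) w" "cross7 y (cross7 (cross7 x y) w) = - cross7 x w"
  "cross7 (cross7 x y) (cross7 x w) = - cross7 y w" "cross7 (cross7 x y) (cross7 y w) = cross7 x w"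
  "cross7 (cross7 x w) (cross7 y w) = - cross7 x y" "cross7 (cross7 x w) (cross7 (cross7 x y) w) = y"
  "cross7 (cross7 y w) (cross7 (cross7 x y) w) = - x"
proof -
  note frame = unit orth inner_frame cross_frame_double
  have xyw: "cross7 x (cross7 y w) = - cross7 (cross7 x y) w"
    using frame by (simp add: cross7_assoc_orthogonal)
  moreover have "cross7 y (cross7 x w) = cross7 (cross7 x y) w"
    using frame cross7_assoc_orthogonal[of y x w] cross7_anticomm[of y x] by (simp add: inner_commute)
  moreover have "cross7 x (cross7 (cross7 x y) w) = cross7 y w"
    using frame cross7_assoc_orthogonal[of x "cross7 x y" w] by (simp add: inner_commute)
  moreover have "cross7 y (cross7 (cross7 x y) w) = - cross7 x w"
    using frame cross7_assoc_orthogonal[of y "cross7 x y" w] by (simp add: inner_commute)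
  moreover have zxw: "cross7 (cross7 x y) (cross7 x w) = - cross7 y w"
    using frame cross7_assoc_orthogonal[of "cross7 x y" x w] cross7_anticomm[of "cross7 x y" x]
    by (simp add: inner_commute)
  moreover have zyw: "cross7 (cross7 x y) (cross7 y w) = cross7 x w"
    using frame cross7_assoc_orthogonal[of "cross7 x y" y w] cross7_anticomm[of "cross7 x y" y]
    by (simp add: inner_commute)
  moreover have "cross7 (cross7 x w) (cross7 y w) = - cross7 x y"
    using frame cross7_assoc_orthogonal[of "cross7 y w" x w] cross7_anticomm[of "cross7 y w" x]
      cross7_anticomm[of "cross7 x w" "cross7 y w"] cross7_anticomm[of "cross7 (cross7 x y) w" w] xyw
    by (simp add: inner_commute)
  moreover have "cross7 (cross7 x w) (cross7 (cross7 x y) w) = y"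
    using frame cross7_assoc_orthogonal[of "cross7 x w" "cross7 x y" w]
      cross7_anticomm[of "cross7 x w" "cross7 x y"] cross7_anticomm[of "cross7 y w" w] zxw
    by (simp add: inner_commute)
  moreover have "cross7 (cross7 y w) (cross7 (cross7 x y) w) = - x"
    using frame cross7_assoc_orthogonal[of "cross7 y w" "cross7 x y" w]
      cross7_anticomm[of "cross7 y w" "cross7 x y"] cross7_anticomm[of "cross7 x w" w] zyw
    by (simp add: inner_commute)
  ultimately show
    "cross7 x (cross7 y w) = - cross7 (cross7 x y) w" "cross7 x (cross7 (cross7 x y) w) = cross7 y w"
    "cross7 y (cross7 x w) = cross7 (cross7 x y) w" "cross7 y (cross7 (cross7 x y) w) = - cross7 x w"
    "cross7 (cross7 x y) (cross7 x w) = - cross7 y w" "cross7 (cross7 x y) (cross7 y w) = cross7 x w"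
    "cross7 (cross7 x w) (cross7 y w) = - cross7 x y" "cross7 (cross7 x w) (cross7 (cross7 x y) w) = y"
    "cross7 (cross7 y w) (cross7 (cross7 x y) w) = - x"
    by simp_all
qed

lemma g2_frame_g2_frame_of: "g2_frame (g2_frame_of x y w)"
proof -
  note table = cross_frame_double cross_frame_double[THEN cross7_flip]
    cross_frame_mixed cross_frame_mixed[THEN cross7_flip] cross7_anticomm[of y x]
    cross7_anticomm[of w x] cross7_anticomm[of w y] cross7_anticomm[of w "cross7 x y"]
  note std_table = cross7_basis cross7_basis[THEN cross7_flip]
  have "cross7 (g2_frame_of x y w i) (g2_frame_of x y w j) =
        frame_matrix (g2_frame_of x y w) *v cross7 (e_i i) (e_i j)" for i j
    using exhaust_7[of i] exhaust_7[of j]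
    by (elim disjE) (simp_all add: table std_table g2_frame_of_simps linear_neg[OF matrix_vector_mul_linear])
  then show ?thesis by (simp add: g2_frame_def orthonormal_frame)
qed

end

definition std_assoc_plane :: "(real^7) set" where
  "std_assoc_plane = span (e_i ` {1, 2, 3})"

lemma associative_g2_frame:
  assumes "associative P"
  obtains b where "g2_frame b" "P = (*v) (frame_matrix b) ` std_assoc_plane"
proof -
  have P: "subspace P" "dim P = 3" "\<And>u v. u \<in> P \<Longrightarrow> v \<in> P \<Longrightarrow> cross7 u v \<in> P"
    using assms by (auto simp: associative_def)
  obtain x y where xy: "x \<in> P" "y \<in> P" "x \<bullet> x = 1" "y \<bullet> y = 1" "x \<bullet> y = 0"
    using orthonormal_pair_in_subspace[OF P(1)] P(2) by auto
  obtain w where w: "w \<bullet> w = 1" "\<And>v. v \<in> P \<Longrightarrow> v \<bullet> w = 0"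
    using unit_orthogonal_to_subspace[of P] P(2) by auto
  interpret g2_triple x y w
    using xy w P(3) by unfold_locales auto
  define b where "b = g2_frame_of x y w"
  have b: "g2_frame b" "b ` {1, 2, 3} \<subseteq> P"
    using g2_frame_g2_frame_of xy P(3) by (auto simp: b_def g2_frame_of_simps)
  have "span (b ` {1, 2, 3}) = P"
  proof (rule subspace_dim_equal)
    show "span (b ` {1, 2, 3}) \<subseteq> P" using b(2) P(1) by (rule span_minimal)
    show "dim P \<le> dim (span (b ` {1, 2, 3}))"
      using b(1) P(2) dim_span_orthonormal_family[of b "{1, 2, 3}"] by (simp add: g2_frame_def)
  qed (simp_all add: P(1))
  also have "b ` {1, 2, 3} = (*v) (frame_matrix b) ` e_i ` {1, 2, 3}"
    by (simp add: image_image)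
  also have "span \<dots> = (*v) (frame_matrix b) ` std_assoc_plane"
    unfolding std_assoc_plane_def by (rule span_linear_image[OF matrix_vector_mul_linear])
  finally show thesis using that b(1) by blast
qed

section \<open>Conjugation by orthogonal matrices\<close>

definition conj_by :: "real^'n^'n \<Rightarrow> real^'n^'n \<Rightarrow> real^'n^'n" where
  "conj_by g X = g ** X ** transpose g"

lemma linear_conj_by: "linear (conj_by g)"
  by (rule linearI)
    (simp_all add: conj_by_def matrix_add_ldistrib matrix_add_rdistrib scalar_matrix_assoc matrix_scalar_ac)

lemma conj_by_mult:
  assumes "orthogonal_matrix g"
  shows "conj_by g (X ** Y) = conj_by g X ** conj_by g Y"
proof -
  have "conj_by g X ** conj_by g Y = g ** X ** (transpose g ** g) ** Y ** transpose g"
    by (simp add: conj_by_def matrix_mul_assoc)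
  also have "\<dots> = g ** X ** Y ** transpose g"
    using assms by (simp add: orthogonal_matrix)
  finally show ?thesis
    by (simp add: conj_by_def matrix_mul_assoc)
qed

lemma conj_by_lie_bracket:
  "orthogonal_matrix g \<Longrightarrow> conj_by g (lie_bracket X Y) = lie_bracket (conj_by g X) (conj_by g Y)"
  by (simp add: lie_bracket_def conj_by_mult linear_diff[OF linear_conj_by])

lemma conj_by_transpose_inverse:
  assumes "orthogonal_matrix g"
  shows "conj_by (transpose g) (conj_by g X) = X"
proof -
  have "conj_by (transpose g) (conj_by g X) = (transpose g ** g) ** X ** (transpose g ** g)"
    by (simp add: conj_by_def matrix_mul_assoc)
  then show ?thesis
    using assms by (simp add: orthogonal_matrix)
qed

lemma conj_by_so: "X \<in> so \<Longrightarrow> conj_by g X \<in> so"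
  by (simp add: so_def conj_by_def matrix_transpose_mul matrix_mul_assoc linear_neg[OF linear_conj_by, unfolded conj_by_def])

lemma trace_conj_by:
  assumes "orthogonal_matrix g"
  shows "trace (conj_by g A) = trace A"
proof -
  have "trace (conj_by g A) = trace ((transpose g ** g) ** A)"
    unfolding conj_by_def by (simp only: trace_mul_sym[of "g ** A"] matrix_mul_assoc)
  then show ?thesis
    using assms by (simp add: orthogonal_matrix)
qed

lemma form_inner_eq_trace: "form_inner X Y = trace (transpose X ** Y)"
  by (simp add: form_inner_def form_of_def e_i_def inner_axis matrix_vector_mult_basis column_def
      trace_def matrix_matrix_mult_def transpose_def)

lemma form_inner_conj_by:
  assumes "orthogonal_matrix g"
  shows "form_inner (conj_by g X) (conj_by g Y) = form_inner X Y"
proof -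
  have "transpose (conj_by g X) ** conj_by g Y = g ** transpose X ** (transpose g ** g) ** Y ** transpose g"
    by (simp add: conj_by_def matrix_transpose_mul matrix_mul_assoc)
  also have "\<dots> = conj_by g (transpose X ** Y)"
    using assms by (simp add: orthogonal_matrix conj_by_def matrix_mul_assoc)
  finally show ?thesis
    using assms by (simp add: form_inner_eq_trace trace_conj_by)
qed

lemma op_of_form_of: "op_of (form_of X) = X"
  by (simp add: op_of_def form_of_def e_i_def inner_axis matrix_vector_mult_basis column_def vec_eq_iff)

lemma form_of_op_of:
  assumes "bilinear B"
  shows "form_of (op_of B) = B"
proof (rule bilinear_eq_stdbasis)
  show "bilinear (form_of (op_of B))"
    by (auto simp: bilinear_def form_of_def intro!: linearI
        simp: matrix_vector_right_distrib inner_add_left inner_add_right matrix_vector_mult_scaleR)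
  show "form_of (op_of B) u v = B u v" if u: "u \<in> Basis" and v: "v \<in> Basis" for u v
  proof -
    obtain i j where "u = axis i 1" "v = axis j 1"
      using u v by (auto simp: Basis_vec_real)
    then show ?thesis
      by (simp add: form_of_def op_of_def e_i_def inner_axis matrix_vector_mult_basis column_def)
  qed
qed (fact assms)

lemma form_of_conj_by: "form_of (conj_by g X) a c = form_of X (transpose g *v a) (transpose g *v c)"
proof -
  have "form_of (conj_by g X) a c = (g *v (X *v (transpose g *v a))) \<bullet> c"
    unfolding form_of_def conj_by_def by (simp only: matrix_vector_mul_assoc matrix_mul_assoc)
  also have "\<dots> = (X *v (transpose g *v a)) \<bullet> (transpose g *v c)"
    by (metis dot_lmul_matrix inner_commute vector_transpose_matrix)
  finally show ?thesis by (simp add: form_of_def)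
qed

lemma op_of_conj_by:
  assumes "bilinear B"
  shows "op_of (\<lambda>a c. B (transpose g *v a) (transpose g *v c)) = conj_by g (op_of B)"
proof -
  have "(\<lambda>a c. B (transpose g *v a) (transpose g *v c)) = form_of (conj_by g (op_of B))"
    by (simp add: fun_eq_iff form_of_conj_by form_of_op_of[OF assms])
  then show ?thesis by (simp add: op_of_form_of)
qed

lemma bilinear_wedge2: "bilinear (wedge2 u v)"
  by (auto simp: bilinear_def wedge2_def intro!: linearI simp: inner_add_left inner_add_right algebra_simps)

lemma bilinear_Psi2: "bilinear (Psi2 u v)"
  by (auto simp: bilinear_def Psi2_def psi_eq_cross7 intro!: linearI
      simp: cross7_add_right cross7_scaleR_right inner_add_left inner_add_right algebra_simps)

lemma Lambda2_image: "Lambda2 ((*v) g ` P) = conj_by g ` Lambda2 P"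
proof -
  have wedge: "wedge2 (g *v u) (g *v v) = (\<lambda>a c. wedge2 u v (transpose g *v a) (transpose g *v c))" for u v
    by (simp add: fun_eq_iff wedge2_def dot_lmul_matrix[symmetric] vector_transpose_matrix inner_commute)
  have "op_of (wedge2 (g *v u) (g *v v)) = conj_by g (op_of (wedge2 u v))" for u v
    unfolding wedge by (rule op_of_conj_by[OF bilinear_wedge2])
  then show ?thesis
    unfolding Lambda2_def by (rule span_pairs_image[OF linear_conj_by])
qed

lemma PsiSpan_image:
  assumes "g2_frame b"
  shows "PsiSpan ((*v) (frame_matrix b) ` P) = conj_by (frame_matrix b) ` PsiSpan P"
proof -
  let ?g = "frame_matrix b"
  have "?g *v (transpose ?g *v a) = a" for a
    using g2_frame_orthogonal_matrix[OF assms]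
    by (simp add: matrix_vector_mul_assoc orthogonal_matrix_def del: transpose_matrix_vector)
  then have Psi: "Psi2 (?g *v u) (?g *v v) = (\<lambda>a c. Psi2 u v (transpose ?g *v a) (transpose ?g *v c))" for u v
    by (metis Psi2_def g2_frame_psi[OF assms])
  have "op_of (Psi2 (?g *v u) (?g *v v)) = conj_by ?g (op_of (Psi2 u v))" for u v
    unfolding Psi by (rule op_of_conj_by[OF bilinear_Psi2])
  then show ?thesis
    unfolding PsiSpan_def by (rule span_pairs_image[OF linear_conj_by])
qed

lemma Theta_image:
  assumes "g2_frame b"
  shows "Theta ((*v) (frame_matrix b) ` P) = conj_by (frame_matrix b) ` Theta P"
  unfolding Theta_def Lambda2_image PsiSpan_image[OF assms] by (rule sums_linear_image[OF linear_conj_by])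

section \<open>The standard associative plane\<close>

text \<open>The upper triangle of an element of Theta P0 for P0 = span {e1, e2, e3}: the a-part is
  a1 e23 + a2 e31 + a3 e12 in Lambda2 P0, the b-part is b1 Psi(e2,e3) + b2 Psi(e3,e1) + b3 Psi(e1,e2).\<close>

definition theta_std :: "real^3 \<Rightarrow> real^3 \<Rightarrow> real^7^7" where
  "theta_std a b =
    (let U = \<lambda>i j::7.
       if i = 1 \<and> j = 2 then - a$3 else if i = 1 \<and> j = 3 then a$2 else if i = 2 \<and> j = 3 then - a$1
       else if i = 4 \<and> j = 5 then b$1 else if i = 6 \<and> j = 7 then - b$1
       else if i = 4 \<and> j = 6 then b$2 else if i = 5 \<and> j = 7 then b$2
       else if i = 4 \<and> j = 7 then b$3 else if i = 5 \<and> j = 6 then - b$3 else 0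
     in \<chi> i j. U i j - U j i)"

lemma theta_std_bracket:
  "lie_bracket (theta_std a b) (theta_std c d) = theta_std (cross3 a c) (2 *\<^sub>R cross3 b d)"
  by (simp add: vec_eq_iff forall_7 lie_bracket_def matrix_matrix_mult_def sum_7 theta_std_def
      cross3_def algebra_simps)

lemma theta_std_add: "theta_std a b + theta_std c d = theta_std (a + c) (b + d)"
  by (simp add: vec_eq_iff forall_7 theta_std_def)

lemma theta_std_scaleR: "r *\<^sub>R theta_std a b = theta_std (r *\<^sub>R a) (r *\<^sub>R b)"
  by (simp add: vec_eq_iff forall_7 theta_std_def)

lemma theta_std_eq_iff: "theta_std a b = theta_std c d \<longleftrightarrow> a = c \<and> b = d"
  by (auto simp: vec_eq_iff forall_7 forall_3 theta_std_def)

lemma theta_std_zero [simp]: "theta_std 0 0 = 0"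
  by (simp add: vec_eq_iff forall_7 theta_std_def)

lemma theta_std_so: "theta_std a b \<in> so"
  by (simp add: so_def vec_eq_iff forall_7 theta_std_def transpose_def)

lemma form_inner_theta_std: "form_inner (theta_std a 0) (theta_std 0 b) = 0"
  by (simp add: form_inner_eq_trace trace_def matrix_matrix_mult_def sum_7 theta_std_def transpose_def)

lemma linear_theta_std_fst: "linear (\<lambda>a. theta_std a 0)"
  by (rule linearI) (simp_all add: theta_std_add theta_std_scaleR)

lemma linear_theta_std_snd: "linear (\<lambda>b. theta_std 0 b)"
  by (rule linearI) (simp_all add: theta_std_add theta_std_scaleR)

lemma subspace_theta_std: "subspace {theta_std a b | a b. True}"
  unfolding subspace_def
  by (auto simp: theta_std_add theta_std_scaleR) (metis theta_std_zero)+

lemma op_of_wedge2_self: "op_of (wedge2 u u) = 0"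
  by (simp add: vec_eq_iff op_of_def wedge2_def)

lemma op_of_Psi2_self: "op_of (Psi2 u u) = 0"
  by (simp add: vec_eq_iff op_of_def Psi2_def psi_eq_cross7 cross7_cross7 inner_diff_left)

lemma op_of_wedge2_std_basis:
  "op_of (wedge2 (e_i 2) (e_i 3)) = theta_std (axis 1 1) 0"
  "op_of (wedge2 (e_i 3) (e_i 1)) = theta_std (axis 2 1) 0"
  "op_of (wedge2 (e_i 1) (e_i 2)) = theta_std (axis 3 1) 0"
  "op_of (wedge2 (e_i 3) (e_i 2)) = theta_std (- axis 1 1) 0"
  "op_of (wedge2 (e_i 1) (e_i 3)) = theta_std (- axis 2 1) 0"
  "op_of (wedge2 (e_i 2) (e_i 1)) = theta_std (- axis 3 1) 0"
  by (simp_all add: vec_eq_iff forall_7 op_of_def wedge2_def inner_e_i theta_std_def axis_def)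

lemma op_of_Psi2_std_basis:
  "op_of (Psi2 (e_i 2) (e_i 3)) = theta_std 0 (axis 1 1)"
  "op_of (Psi2 (e_i 3) (e_i 1)) = theta_std 0 (axis 2 1)"
  "op_of (Psi2 (e_i 1) (e_i 2)) = theta_std 0 (axis 3 1)"
  "op_of (Psi2 (e_i 3) (e_i 2)) = theta_std 0 (- axis 1 1)"
  "op_of (Psi2 (e_i 1) (e_i 3)) = theta_std 0 (- axis 2 1)"
  "op_of (Psi2 (e_i 2) (e_i 1)) = theta_std 0 (- axis 3 1)"
  by (simp_all add: vec_eq_iff forall_7 op_of_def Psi2_def psi_eq_cross7 cross7_basis
      cross7_basis[THEN cross7_flip] inner_e_i theta_std_def axis_def)

lemma bilinear_op_of:
  assumes "\<And>a c. bilinear (\<lambda>u v. B u v a c)"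
  shows "bilinear (\<lambda>u v. op_of (B u v))"
  by (auto simp: bilinear_def vec_eq_iff op_of_def intro!: linearI
      simp: bilinear_ladd[OF assms] bilinear_radd[OF assms] bilinear_lmul[OF assms] bilinear_rmul[OF assms])

lemma bilinear_op_of_wedge2: "bilinear (\<lambda>u v. op_of (wedge2 u v))"
  by (rule bilinear_op_of)
    (auto simp: bilinear_def wedge2_def intro!: linearI simp: inner_add_left algebra_simps)

lemma bilinear_op_of_Psi2: "bilinear (\<lambda>u v. op_of (Psi2 u v))"
  by (rule bilinear_op_of)
    (auto simp: bilinear_def Psi2_def psi_eq_cross7 intro!: linearI
      simp: cross7_add_left cross7_add_right cross7_scaleR_left cross7_scaleR_right inner_add_left
      inner_add_right algebra_simps)

lemma Lambda2_std_assoc_plane: "Lambda2 std_assoc_plane = range (\<lambda>a. theta_std a 0)"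
proof -
  let ?E = "e_i ` {1, 2, 3}"
  have "Lambda2 std_assoc_plane = span {op_of (wedge2 u v) | u v. u \<in> ?E \<and> v \<in> ?E}"
    unfolding Lambda2_def std_assoc_plane_def by (rule span_bilinear_pairs_span[OF bilinear_op_of_wedge2])
  also have "\<dots> = range (\<lambda>a. theta_std a 0)"
  proof (rule span_eq_range_linear[OF linear_theta_std_fst])
    show "{op_of (wedge2 u v) | u v. u \<in> ?E \<and> v \<in> ?E} \<subseteq> range (\<lambda>a. theta_std a 0)"
      by (auto simp: op_of_wedge2_std_basis op_of_wedge2_self intro: range_eqI[of _ _ 0])
    show "theta_std (axis i 1) 0 \<in> {op_of (wedge2 u v) | u v. u \<in> ?E \<and> v \<in> ?E}" for i
      using exhaust_3[of i] by (auto simp flip: op_of_wedge2_std_basis; blast)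
  qed
  finally show ?thesis .
qed

lemma PsiSpan_std_assoc_plane: "PsiSpan std_assoc_plane = range (\<lambda>b. theta_std 0 b)"
proof -
  let ?E = "e_i ` {1, 2, 3}"
  have "PsiSpan std_assoc_plane = span {op_of (Psi2 u v) | u v. u \<in> ?E \<and> v \<in> ?E}"
    unfolding PsiSpan_def std_assoc_plane_def by (rule span_bilinear_pairs_span[OF bilinear_op_of_Psi2])
  also have "\<dots> = range (\<lambda>b. theta_std 0 b)"
  proof (rule span_eq_range_linear[OF linear_theta_std_snd])
    show "{op_of (Psi2 u v) | u v. u \<in> ?E \<and> v \<in> ?E} \<subseteq> range (\<lambda>b. theta_std 0 b)"
      by (auto simp: op_of_Psi2_std_basis op_of_Psi2_self intro: range_eqI[of _ _ 0])
    show "theta_std 0 (axis i 1) \<in> {op_of (Psi2 u v) | u v. u \<in> ?E \<and> v \<in> ?E}" for i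
      using exhaust_3[of i] by (auto simp flip: op_of_Psi2_std_basis; blast)
  qed
  finally show ?thesis .
qed

lemma Theta_std_assoc_plane: "Theta std_assoc_plane = {theta_std a b | a b. True}"
  unfolding Theta_def Lambda2_std_assoc_plane PsiSpan_std_assoc_plane
proof (intro equalityI subsetI)
  fix Z assume "Z \<in> {X + Y | X Y. X \<in> range (\<lambda>a. theta_std a 0) \<and> Y \<in> range (theta_std 0)}"
  then obtain a b where "Z = theta_std a 0 + theta_std 0 b"
    by blast
  then have "Z = theta_std a b"
    by (simp add: theta_std_add)
  then show "Z \<in> {theta_std a b | a b. True}"
    by blast
next
  fix Z assume "Z \<in> {theta_std a b | a b. True}"
  then obtain a b where "Z = theta_std a 0 + theta_std 0 b"
    by (auto simp: theta_std_add)
  then show "Z \<in> {X + Y | X Y. X \<in> range (\<lambda>a. theta_std a 0) \<and> Y \<in> range (theta_std 0)}"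
    by blast
qed

section \<open>so(4)\<close>

text \<open>a enters through the self-dual and b through the anti-self-dual 2-forms on R^4, so that
  so4_std has the same bracket relation as theta_std.\<close>

definition so4_std :: "real^3 \<Rightarrow> real^3 \<Rightarrow> real^4^4" where
  "so4_std a b =
    (let U = \<lambda>i j::4.
       if i = 1 \<and> j = 2 then a$1 / 2 + b$1 else if i = 3 \<and> j = 4 then a$1 / 2 - b$1
       else if i = 1 \<and> j = 3 then a$2 / 2 + b$2 else if i = 2 \<and> j = 4 then - a$2 / 2 + b$2
       else if i = 1 \<and> j = 4 then - a$3 / 2 + b$3 else if i = 2 \<and> j = 3 then - a$3 / 2 - b$3
       else 0
     in \<chi> i j. U i j - U j i)"

lemma so4_std_bracket:
  "lie_bracket (so4_std a b) (so4_std c d) = so4_std (cross3 a c) (2 *\<^sub>R cross3 b d)"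
  by (simp add: vec_eq_iff forall_4 lie_bracket_def matrix_matrix_mult_def sum_4 so4_std_def
      cross3_def field_simps)

lemma so4_std_eq_iff: "so4_std a b = so4_std c d \<longleftrightarrow> a = c \<and> b = d"
proof
  assume "so4_std a b = so4_std c d"
  then have "so4_std a b $ i $ j = so4_std c d $ i $ j" for i j by simp
  from this[of 1 2] this[of 3 4] this[of 1 3] this[of 2 4] this[of 1 4] this[of 2 3]
  show "a = c \<and> b = d"
    by (simp add: so4_std_def vec_eq_iff forall_3)
qed simp

lemma so_eq_so4_std: "(so :: (real^4^4) set) = {so4_std a b | a b. True}"
proof (intro equalityI subsetI)
  fix M :: "real^4^4" assume "M \<in> so"
  have skew: "M $ i $ j = - M $ j $ i" for i j
  proof -
    have "transpose M $ j $ i = (- M) $ j $ i"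
      using \<open>M \<in> so\<close> by (simp add: so_def)
    then show ?thesis by (simp add: transpose_def)
  qed
  have diag: "M $ i $ i = 0" for i
    using skew[of i i] by simp
  let ?a = "vector [M$1$2 + M$3$4, M$1$3 - M$2$4, - (M$1$4 + M$2$3)] :: real^3"
  let ?b = "vector [(M$1$2 - M$3$4) / 2, (M$1$3 + M$2$4) / 2, (M$1$4 - M$2$3) / 2] :: real^3"
  have "M = so4_std ?a ?b"
    using diag skew[of 2 1] skew[of 3 1] skew[of 4 1] skew[of 3 2] skew[of 4 2] skew[of 4 3]
    by (simp add: vec_eq_iff forall_4 so4_std_def field_simps)
  then show "M \<in> {so4_std a b | a b. True}" by blast
next
  fix M :: "real^4^4" assume "M \<in> {so4_std a b | a b. True}"
  then show "M \<in> so"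
    by (auto simp: so_def vec_eq_iff forall_4 so4_std_def transpose_def)
qed

definition theta_to_so4 :: "real^7^7 \<Rightarrow> real^4^4" where
  "theta_to_so4 X = so4_std (vector [X$3$2, X$1$3, X$2$1]) (vector [X$4$5, X$4$6, X$4$7])"

lemma theta_to_so4_theta_std [simp]: "theta_to_so4 (theta_std a b) = so4_std a b"
proof -
  have "vector [a$1, a$2, a$3] = a" "vector [b$1, b$2, b$3] = b"
    by (simp_all add: vec_eq_iff forall_3)
  then show ?thesis
    by (simp add: theta_to_so4_def theta_std_def)
qed

lemma linear_theta_to_so4: "linear theta_to_so4"
  by (rule linearI) (simp_all add: theta_to_so4_def so4_std_def vec_eq_iff forall_4 field_simps)

lemma bij_betw_theta_to_so4: "bij_betw theta_to_so4 {theta_std a b | a b. True} so"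
  unfolding bij_betw_def so_eq_so4_std
proof
  show "inj_on theta_to_so4 {theta_std a b | a b. True}"
    by (auto simp: inj_on_def so4_std_eq_iff)
  show "theta_to_so4 ` {theta_std a b | a b. True} = {so4_std a b | a b. True}"
  proof (intro equalityI subsetI)
    fix M assume "M \<in> theta_to_so4 ` {theta_std a b | a b. True}"
    then show "M \<in> {so4_std a b | a b. True}" by force
  next
    fix M assume "M \<in> {so4_std a b | a b. True}"
    then obtain a b where "M = theta_to_so4 (theta_std a b)" by auto
    then show "M \<in> theta_to_so4 ` {theta_std a b | a b. True}" by blast
  qed
qed

section \<open>Reduction to the standard plane\<close>

text \<open>The conclusion of the theorem as a property of P, so that it can be checked on P0 and
  transported along G2 frames.\<close>

definition Theta_is_so4 :: "(real^7) set \<Rightarrow> bool" where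
  "Theta_is_so4 P \<longleftrightarrow> Lambda2 P \<inter> PsiSpan P = {0}
    \<and> (\<forall>X\<in>Lambda2 P. \<forall>Y\<in>PsiSpan P. form_inner X Y = 0)
    \<and> subspace (Theta P)
    \<and> Theta P \<subseteq> (so :: (real^7^7) set)
    \<and> (\<forall>X\<in>Theta P. \<forall>Y\<in>Theta P. lie_bracket X Y \<in> Theta P)
    \<and> (\<exists>f :: real^7^7 \<Rightarrow> real^4^4. linear f \<and> bij_betw f (Theta P) so
         \<and> (\<forall>X\<in>Theta P. \<forall>Y\<in>Theta P. f (lie_bracket X Y) = lie_bracket (f X) (f Y)))"

lemma Theta_is_so4_std_assoc_plane: "Theta_is_so4 std_assoc_plane"
  unfolding Theta_is_so4_def Lambda2_std_assoc_plane PsiSpan_std_assoc_plane Theta_std_assoc_plane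
proof (intro conjI exI[of _ theta_to_so4] ballI)
  let ?T = "{theta_std a b | a b. True}"
  have "0 \<in> range (\<lambda>a. theta_std a 0)" "0 \<in> range (theta_std 0)"
    by (rule range_eqI[where x = 0], simp)+
  then show "range (\<lambda>a. theta_std a 0) \<inter> range (theta_std 0) = {0}"
    by (auto simp: theta_std_eq_iff)
  show "form_inner X Y = 0" if "X \<in> range (\<lambda>a. theta_std a 0)" "Y \<in> range (theta_std 0)" for X Y
    using that by (auto simp: form_inner_theta_std)
  show "?T \<subseteq> so"
    by (auto simp: theta_std_so)
  show "subspace ?T" "linear theta_to_so4" "bij_betw theta_to_so4 ?T so"
    by (fact subspace_theta_std linear_theta_to_so4 bij_betw_theta_to_so4)+
  fix X Y assume "X \<in> ?T" "Y \<in> ?T"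
  then obtain a b c d where XY: "X = theta_std a b" "Y = theta_std c d"
    by blast
  then have "lie_bracket X Y = theta_std (cross3 a c) (2 *\<^sub>R cross3 b d)"
    by (simp add: theta_std_bracket)
  then show "lie_bracket X Y \<in> ?T"
    "theta_to_so4 (lie_bracket X Y) = lie_bracket (theta_to_so4 X) (theta_to_so4 Y)"
    using XY by (auto simp: so4_std_bracket)
qed

lemma lie_iso_conj_by:
  fixes f :: "real^'n^'n \<Rightarrow> real^'m^'m"
  assumes g: "orthogonal_matrix g" and f: "linear f" "bij_betw f T S"
    "\<forall>X\<in>T. \<forall>Y\<in>T. f (lie_bracket X Y) = lie_bracket (f X) (f Y)"
  defines "h \<equiv> f \<circ> conj_by (transpose g)"
  shows "linear h \<and> bij_betw h (conj_by g ` T) S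
    \<and> (\<forall>X\<in>conj_by g ` T. \<forall>Y\<in>conj_by g ` T. h (lie_bracket X Y) = lie_bracket (h X) (h Y))"
proof (intro conjI ballI)
  have inv: "conj_by (transpose g) (conj_by g X) = X" "conj_by g (conj_by (transpose g) X) = X" for X
    using conj_by_transpose_inverse[OF g] conj_by_transpose_inverse[of "transpose g"] g by simp_all
  show "linear h"
    unfolding h_def using linear_conj_by f(1) by (rule linear_compose)
  have "bij_betw (conj_by (transpose g)) (conj_by g ` T) T"
    by (rule bij_betw_byWitness[where f' = "conj_by g"]) (auto simp: inv)
  then show "bij_betw h (conj_by g ` T) S"
    unfolding h_def using f(2) by (rule bij_betw_trans)
  fix X Y assume "X \<in> conj_by g ` T" "Y \<in> conj_by g ` T"
  then show "h (lie_bracket X Y) = lie_bracket (h X) (h Y)"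
    using f(3) by (auto simp: h_def inv simp flip: conj_by_lie_bracket[OF g])
qed

lemma Theta_is_so4_g2_frame_image:
  assumes "g2_frame b" "Theta_is_so4 P"
  shows "Theta_is_so4 ((*v) (frame_matrix b) ` P)"
proof -
  let ?C = "conj_by (frame_matrix b)"
  have orth: "orthogonal_matrix (frame_matrix b)"
    by (rule g2_frame_orthogonal_matrix[OF assms(1)])
  have P: "Lambda2 P \<inter> PsiSpan P = {0}" "\<forall>X\<in>Lambda2 P. \<forall>Y\<in>PsiSpan P. form_inner X Y = 0"
    "subspace (Theta P)" "Theta P \<subseteq> so" "\<forall>X\<in>Theta P. \<forall>Y\<in>Theta P. lie_bracket X Y \<in> Theta P"
    "\<exists>f :: real^7^7 \<Rightarrow> real^4^4. linear f \<and> bij_betw f (Theta P) so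
       \<and> (\<forall>X\<in>Theta P. \<forall>Y\<in>Theta P. f (lie_bracket X Y) = lie_bracket (f X) (f Y))"
    using assms(2) by (simp_all add: Theta_is_so4_def)
  show ?thesis
    unfolding Theta_is_so4_def Lambda2_image PsiSpan_image[OF assms(1)] Theta_image[OF assms(1)]
  proof (intro conjI ballI)
    have "inj ?C"
      using conj_by_transpose_inverse[OF orth] by (rule inj_on_inverseI)
    then have "?C ` Lambda2 P \<inter> ?C ` PsiSpan P = ?C ` (Lambda2 P \<inter> PsiSpan P)"
      by (rule image_Int[symmetric])
    also have "\<dots> = {0}"
      using P(1) linear_0[OF linear_conj_by] by simp
    finally show "?C ` Lambda2 P \<inter> ?C ` PsiSpan P = {0}" .
    show "form_inner X Y = 0" if "X \<in> ?C ` Lambda2 P" "Y \<in> ?C ` PsiSpan P" for X Y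
      using that P(2) by (auto simp: form_inner_conj_by[OF orth])
    show "subspace (?C ` Theta P)"
      using P(3) by (rule linear_subspace_image[OF linear_conj_by])
    show "?C ` Theta P \<subseteq> so"
      using P(4) conj_by_so by auto
    show "lie_bracket X Y \<in> ?C ` Theta P" if "X \<in> ?C ` Theta P" "Y \<in> ?C ` Theta P" for X Y
      using that P(5) by (auto simp flip: conj_by_lie_bracket[OF orth])
    show "\<exists>f :: real^7^7 \<Rightarrow> real^4^4. linear f \<and> bij_betw f (?C ` Theta P) so
       \<and> (\<forall>X\<in>?C ` Theta P. \<forall>Y\<in>?C ` Theta P. f (lie_bracket X Y) = lie_bracket (f X) (f Y))"
      using P(6) lie_iso_conj_by[OF orth] by blast
  qed
qed

theorem proposition4p8:
  fixes P :: "(real^7) set"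
  assumes "associative P"
  shows "Lambda2 P \<inter> PsiSpan P = {0}
    \<and> (\<forall>X\<in>Lambda2 P. \<forall>Y\<in>PsiSpan P. form_inner X Y = 0)
    \<and> subspace (Theta P)
    \<and> Theta P \<subseteq> (so :: (real^7^7) set)
    \<and> (\<forall>X\<in>Theta P. \<forall>Y\<in>Theta P. lie_bracket X Y \<in> Theta P)
    \<and> (\<exists>f :: real^7^7 \<Rightarrow> real^4^4. linear f \<and> bij_betw f (Theta P) so
         \<and> (\<forall>X\<in>Theta P. \<forall>Y\<in>Theta P. f (lie_bracket X Y) = lie_bracket (f X) (f Y)))"
proof -
  obtain b where "g2_frame b" "P = (*v) (frame_matrix b) ` std_assoc_plane"
    using associative_g2_frame[OF assms] .
  then have "Theta_is_so4 P"
    using Theta_is_so4_std_assoc_plane Theta_is_so4_g2_frame_image by blast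
  then show ?thesis
    unfolding Theta_is_so4_def .
qed

end
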